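(* Let $n\ge2$ and let $f$ be a function from the set of Schubert problems for $GL_n$ (triples $(u,v,w)\in S_n^3$ with $l(u)+l(v)+l(w)=\binom n2$) to $\mathbb Z$ satisfying: (1) (descent-cycling invariance) for every triple $(u,v,w)\in S_n^3$ with $l(u)+l(v)+l(w)=\binom n2-1$ and every $i\in\{1,\dots,n-1\}$ with $u(i)<u(i+1)$, $v(i)<v(i+1)$, $w(i)<w(i+1)$, one has $f(us_i,v,w)=f(u,vs_i,w)=f(u,v,ws_i)$; (2) $f(u,v,w)=0$ whenever there is $i$ with $u(i)<u(i+1)$, $v(i)<v(i+1)$ and $w(i)<w(i+1)$; (3) $f(\mathrm{id},\mathrm{id},w_0)=1$. Then $f$ obeys Monk's rule: let $\pi\in S_n$, $i\in\{1,\dots,n-1\}$, and let $\tau\in S_n$ be defined by $\tau(m)=n+1-\pi(m)$. Let $\sigma$ be obtained from $\tau$ by swapping the entries in positions $j<k$, where $\tau(j)>\tau(k)$ and $l(\sigma)=l(\tau)-1$. Then $f(\pi,s_i,\sigma)=1$ if $j\le i<k$, and $f(\pi,s_i,\sigma)=0$ if $j,k\le i$ or $j,k\ge i+1$.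
   Context: Permutations are in one-line notation; $l$ is the number of inversions; $w_0=n\,n{-}1\cdots1$; $\mathrm{id}$ is the identity; $s_i$ is the transposition $i\leftrightarrow i+1$, and $us_i$ denotes $u$ with the entries in positions $i,i+1$ swapped. Note $(\pi,s_i,\sigma)$ is automatically a Schubert problem. *)

theory Defs
  imports "HOL-Combinatorics.Combinatorics"
begin

text \<open>Permutations of S_n are functions nat => nat permuting {1..n} (one-line notation u(i)).\<close>

definition len :: "nat \<Rightarrow> (nat \<Rightarrow> nat) \<Rightarrow> nat" where
  "len n u = card {(a, b). a \<in> {1..n} \<and> b \<in> {1..n} \<and> a < b \<and> u a > u b}"

definition longest :: "nat \<Rightarrow> nat \<Rightarrow> nat" where
  "longest n m = (if m \<in> {1..n} then n + 1 - m else m)"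

definition sref :: "nat \<Rightarrow> nat \<Rightarrow> nat" where
  "sref i = Transposition.transpose i (i + 1)"

definition schubert_problem :: "nat \<Rightarrow> (nat \<Rightarrow> nat) \<Rightarrow> (nat \<Rightarrow> nat) \<Rightarrow> (nat \<Rightarrow> nat) \<Rightarrow> bool" where
  "schubert_problem n u v w \<longleftrightarrow> u permutes {1..n} \<and> v permutes {1..n} \<and> w permutes {1..n}
     \<and> len n u + len n v + len n w = n choose 2"

end

theory Submission
  imports Defs
begin

text \<open>
  Put \<open>\<tau> = w\<^sub>0 \<pi>\<close>, so that \<open>l(\<pi>) + l(\<tau>) = n choose 2\<close> and \<open>(\<pi>, s\<^sub>i, \<sigma>)\<close> is a Schubert problem
  because \<open>\<sigma> = \<tau> t\<^sub>j\<^sub>k\<close> is covered by \<open>\<tau>\<close>. By the classical formula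
  \<open>l(\<tau>) - l(\<tau> t\<^sub>j\<^sub>k) = 1 + 2 #{l. j < l < k \<and> \<tau>(k) < \<tau>(l) < \<tau>(j)}\<close>, no value of \<open>\<tau>\<close> at a
  position between \<open>j\<close> and \<open>k\<close> lies between \<open>\<tau>(k)\<close> and \<open>\<tau>(j)\<close>.

  Cycling a descent of \<open>p\<close> from the first to the third factor gives \<open>f(p, id, w\<^sub>0 p) = 1\<close> by
  induction on \<open>l(p)\<close>. Monk's rule then follows by induction on \<open>k - j\<close>. If \<open>k = j + 1\<close>, then
  \<open>\<sigma> = \<tau> s\<^sub>j\<close>: for \<open>j = i\<close>, cycling \<open>s\<^sub>i\<close> out of the middle factor reduces to \<open>f(\<pi>, id, \<tau>) = 1\<close>;
  otherwise all three permutations ascend at \<open>j\<close> and \<open>f\<close> vanishes. If \<open>k > j + 1\<close>, pick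
  \<open>m \<in> {j, k - 1}\<close> with \<open>m \<noteq> i\<close>. Then \<open>\<sigma>\<close> ascends at \<open>m\<close> iff \<open>\<tau>\<close> does, i.e. iff \<open>\<pi>\<close> descends
  there, while \<open>s\<^sub>i\<close> ascends; so cycling replaces \<open>(\<pi>, \<sigma>)\<close> by \<open>(\<pi> s\<^sub>m, \<sigma> s\<^sub>m)\<close>, and \<open>\<sigma> s\<^sub>m\<close> is
  again covered by \<open>\<tau> s\<^sub>m = w\<^sub>0 \<pi> s\<^sub>m\<close> via a transposition whose ends are one step closer and lie
  on the same sides of \<open>i\<close>.
\<close>

section \<open>Inversions, simple reflections and the longest permutation\<close>

lemma sref_apply: "sref m x = (if x = m then m + 1 else if x = m + 1 then m else x)"
  by (simp add: sref_def transpose_def)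

lemma sref_sref [simp]: "sref m (sref m x) = x"
  by (simp add: sref_def)

lemma comp_sref_sref [simp]: "u \<circ> sref m \<circ> sref m = u"
  by (rule ext) simp

lemma sref_permutes: "1 \<le> m \<Longrightarrow> m < n \<Longrightarrow> sref m permutes {1..n}"
  unfolding sref_def by (rule permutes_swap_id) auto

lemma comp_transpose_comp_sref:
  "u \<circ> transpose a b \<circ> sref m = u \<circ> sref m \<circ> transpose (sref m a) (sref m b)"
  unfolding comp_assoc sref_def
  by (simp only: transpose_comp_eq[OF bij_transpose, of a b m "m + 1"] inv_transpose_eq)

lemma inj_less_iff_not_less:
  fixes p :: "'a \<Rightarrow> 'b::linorder"
  shows "inj p \<Longrightarrow> a \<noteq> b \<Longrightarrow> p a < p b \<longleftrightarrow> \<not> p b < p a"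
  by (metis inj_eq linorder_neqE not_less_iff_gr_or_eq)

definition inversions :: "nat \<Rightarrow> (nat \<Rightarrow> nat) \<Rightarrow> (nat \<times> nat) set" where
  "inversions n u = {(a, b). a \<in> {1..n} \<and> b \<in> {1..n} \<and> a < b \<and> u b < u a}"

lemma len_eq_card_inversions: "len n u = card (inversions n u)"
  by (simp add: len_def inversions_def)

lemma finite_inversions: "finite (inversions n u)"
  by (rule finite_subset[of _ "{1..n} \<times> {1..n}"]) (auto simp: inversions_def)

lemma mem_inversions_comp_sref_iff:
  assumes "1 \<le> m" "m < n" "u m < u (m + 1)"
  shows "(a, b) \<in> inversions n (u \<circ> sref m) \<longleftrightarrow>
           (a, b) = (m, m + 1) \<or> (sref m a, sref m b) \<in> inversions n u"
  using assms by (auto simp: inversions_def sref_apply split: if_splits)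

lemma map_prod_sref_image_iff:
  "x \<in> map_prod (sref m) (sref m) ` S \<longleftrightarrow> map_prod (sref m) (sref m) x \<in> S"
  by (cases x) (force simp: image_iff)

lemma len_comp_sref_ascent:
  assumes m: "1 \<le> m" "m < n" and asc: "u m < u (m + 1)"
  shows "len n (u \<circ> sref m) = len n u + 1"
proof -
  let ?\<phi> = "map_prod (sref m) (sref m)"
  have "inversions n (u \<circ> sref m) = insert (m, m + 1) (?\<phi> ` inversions n u)"
    using mem_inversions_comp_sref_iff[OF assms] by (auto simp: map_prod_sref_image_iff)
  moreover have "(m, m + 1) \<notin> ?\<phi> ` inversions n u"
    by (simp add: map_prod_sref_image_iff sref_apply inversions_def)
  moreover have "inj ?\<phi>"
    by (intro prod.inj_map) (simp_all add: sref_def)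
  ultimately show ?thesis
    by (simp add: len_eq_card_inversions finite_inversions card_image inj_on_subset)
qed

lemma len_comp_sref_descent:
  assumes m: "1 \<le> m" "m < n" and desc: "u (m + 1) < u m"
  shows "len n (u \<circ> sref m) + 1 = len n u"
  using len_comp_sref_ascent[OF m, of "u \<circ> sref m"] desc by (simp add: sref_apply)

lemma len_id: "len n id = 0"
proof -
  have "inversions n id = {}"
    by (auto simp: inversions_def)
  then show ?thesis
    by (simp add: len_eq_card_inversions)
qed

lemma len_sref: "1 \<le> m \<Longrightarrow> m < n \<Longrightarrow> len n (sref m) = 1"
  using len_comp_sref_ascent[of m n id] by (simp add: len_id)

lemma card_increasing_pairs:
  "card {(a, b). a \<in> {1..n} \<and> b \<in> {1..n} \<and> a < b} = n choose 2"
proof (induction n)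
  case 0
  then show ?case by simp
next
  case (Suc n)
  let ?P = "{(a, b). a \<in> {1..n} \<and> b \<in> {1..n} \<and> a < b}"
  let ?Q = "(\<lambda>a. (a, Suc n)) ` {1..n}"
  have "finite ?P"
    by (rule finite_subset[of _ "{1..n} \<times> {1..n}"]) auto
  then have "card (?P \<union> ?Q) = card ?P + card ?Q"
    by (intro card_Un_disjoint) auto
  moreover have "card ?Q = n"
    by (simp add: card_image inj_on_def)
  moreover have "{(a, b). a \<in> {1..Suc n} \<and> b \<in> {1..Suc n} \<and> a < b} = ?P \<union> ?Q"
    by auto
  ultimately show ?case
    using Suc by (simp add: numeral_2_eq_2)
qed

lemma longest_permutes: "longest n permutes {1..n}"
proof (rule bij_imp_permutes)
  show "bij_betw (longest n) {1..n} {1..n}"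
    by (rule bij_betw_byWitness[where f' = "longest n"]) (auto simp: longest_def)
qed (auto simp: longest_def)

lemma longest_comp_less_iff:
  assumes "p permutes {1..n}" "a \<in> {1..n}" "b \<in> {1..n}"
  shows "(longest n \<circ> p) a < (longest n \<circ> p) b \<longleftrightarrow> p b < p a"
proof -
  have "p a \<in> {1..n}" "p b \<in> {1..n}"
    using assms by (simp_all only: permutes_in_image)
  then show ?thesis
    by (auto simp: longest_def)
qed

lemma longest_comp_eq:
  assumes "p permutes {1..n}"
  shows "longest n \<circ> p = (\<lambda>a. if a \<in> {1..n} then n + 1 - p a else a)"
proof
  fix a
  have "p a \<in> {1..n} \<longleftrightarrow> a \<in> {1..n}"
    using assms by (rule permutes_in_image)
  then show "(longest n \<circ> p) a = (if a \<in> {1..n} then n + 1 - p a else a)"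
    using permutes_not_in[OF assms, of a] by (auto simp: longest_def)
qed

lemma len_add_len_longest_comp:
  assumes p: "p permutes {1..n}"
  shows "len n p + len n (longest n \<circ> p) = n choose 2"
proof -
  let ?A = "{(a, b). a \<in> {1..n} \<and> b \<in> {1..n} \<and> a < b \<and> p a < p b}"
  have longest_inversions: "inversions n (longest n \<circ> p) = ?A"
    using longest_comp_less_iff[OF p] unfolding inversions_def by blast
  have partition: "inversions n p \<union> ?A = {(a, b). a \<in> {1..n} \<and> b \<in> {1..n} \<and> a < b}"
  proof -
    have "p a \<noteq> p b" if "a < b" for a b
      using permutes_inj[OF p] that by (auto dest: injD)
    then show ?thesis
      unfolding inversions_def by (auto simp: linorder_neq_iff)
  qed
  have card_union: "card (inversions n p \<union> ?A) = card (inversions n p) + card ?A"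
  proof (rule card_Un_disjoint[OF finite_inversions])
    show "finite ?A"
      by (rule finite_subset[of _ "{1..n} \<times> {1..n}"]) auto
    show "inversions n p \<inter> ?A = {}"
      by (auto simp: inversions_def)
  qed
  show ?thesis
    unfolding len_eq_card_inversions longest_inversions card_union[symmetric] partition
    by (rule card_increasing_pairs)
qed

lemma permutes_ascending_imp_id:
  fixes n :: nat
  assumes p: "p permutes {1..n}" and asc: "\<And>m. 1 \<le> m \<Longrightarrow> m < n \<Longrightarrow> p m < p (m + 1)"
  shows "p = id"
proof
  fix a :: nat
  have range: "p m \<in> {1..n}" if "m \<in> {1..n}" for m
    using that by (simp only: permutes_in_image[OF p])
  have lower: "m \<le> p m" if "1 \<le> m" "m \<le> n" for m
    using that
  proof (induction m rule: dec_induct)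
    case base
    then show ?case using range[of 1] by simp
  next
    case (step k)
    then show ?case using asc[of k] by simp
  qed
  have upper: "p m \<le> m" if "1 \<le> m" "m \<le> n" for m
    using that(2,1)
  proof (induction m rule: inc_induct)
    case base
    then show ?case using range[of n] by simp
  next
    case (step k)
    then show ?case using asc[of k] by simp
  qed
  show "p a = id a"
    using lower[of a] upper[of a] permutes_not_in[OF p, of a] by (cases "a \<in> {1..n}") auto
qed

lemma permutes_exists_descent:
  fixes n :: nat
  assumes p: "p permutes {1..n}" and "p \<noteq> id"
  shows "\<exists>m. 1 \<le> m \<and> m < n \<and> p (m + 1) < p m"
proof (rule ccontr)
  assume no_descent: "\<not> ?thesis"
  have "p m < p (m + 1)" if "1 \<le> m" "m < n" for m
  proof -
    have "p m \<noteq> p (m + 1)"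
      by (simp add: inj_eq[OF permutes_inj[OF p]])
    moreover have "\<not> p (m + 1) < p m"
      using no_descent that by blast
    ultimately show ?thesis
      by linarith
  qed
  then show False
    using permutes_ascending_imp_id[OF p] assms(2) by blast
qed

section \<open>Covering transpositions\<close>

lemma len_comp_transpose_step:
  fixes n :: nat
  assumes \<tau>: "\<tau> permutes {1..n}" and jk: "1 \<le> j" "j + 1 < k" "k \<le> n" and desc: "\<tau> k < \<tau> j"
  shows "len n \<tau> + len n (\<tau> \<circ> sref j \<circ> transpose (j + 1) k)
           = len n (\<tau> \<circ> sref j) + len n (\<tau> \<circ> transpose j k)
             + (if \<tau> k < \<tau> (j + 1) \<and> \<tau> (j + 1) < \<tau> j then 2 else 0)"
proof -
  have j: "1 \<le> j" "j < n"
    using jk by simp_all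
  have "\<tau> \<circ> transpose j k \<circ> sref j = \<tau> \<circ> sref j \<circ> transpose (j + 1) k"
    using comp_transpose_comp_sref[of \<tau> j k j] jk by (simp add: sref_apply)
  moreover have "(\<tau> \<circ> transpose j k) j = \<tau> k" "(\<tau> \<circ> transpose j k) (j + 1) = \<tau> (j + 1)"
    using jk by simp_all
  ultimately have swapped:
    "\<tau> k < \<tau> (j + 1) \<Longrightarrow> len n (\<tau> \<circ> sref j \<circ> transpose (j + 1) k) = len n (\<tau> \<circ> transpose j k) + 1"
    "\<tau> (j + 1) < \<tau> k \<Longrightarrow> len n (\<tau> \<circ> sref j \<circ> transpose (j + 1) k) + 1 = len n (\<tau> \<circ> transpose j k)"
    using len_comp_sref_ascent[OF j, of "\<tau> \<circ> transpose j k"]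
      len_comp_sref_descent[OF j, of "\<tau> \<circ> transpose j k"] by simp_all
  have "\<tau> (j + 1) \<noteq> \<tau> j" "\<tau> (j + 1) \<noteq> \<tau> k"
    using jk by (simp_all add: inj_eq[OF permutes_inj[OF \<tau>]])
  then consider "\<tau> j < \<tau> (j + 1)" | "\<tau> (j + 1) < \<tau> k" | "\<tau> k < \<tau> (j + 1)" "\<tau> (j + 1) < \<tau> j"
    by linarith
  then show ?thesis
  proof cases
    case 1
    then show ?thesis
      using swapped(1) len_comp_sref_ascent[OF j, of \<tau>] desc by simp
  next
    case 2
    then show ?thesis
      using swapped(2) len_comp_sref_descent[OF j, of \<tau>] desc by simp
  next
    case 3
    then show ?thesis
      using swapped(1) len_comp_sref_descent[OF j, of \<tau>] by simp
  qed
qed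

lemma len_comp_transpose:
  fixes n :: nat
  assumes "\<tau> permutes {1..n}" "1 \<le> j" "j < k" "k \<le> n" "\<tau> k < \<tau> j"
  shows "len n \<tau> = len n (\<tau> \<circ> transpose j k) + 1
           + 2 * card {l. j < l \<and> l < k \<and> \<tau> k < \<tau> l \<and> \<tau> l < \<tau> j}"
  using assms
proof (induction "k - j" arbitrary: \<tau> j rule: less_induct)
  case less
  then have j: "1 \<le> j" "j < n"
    by simp_all
  show ?case
  proof (cases "k = j + 1")
    case True
    then have "{l. j < l \<and> l < k \<and> \<tau> k < \<tau> l \<and> \<tau> l < \<tau> j} = {}"
      by auto
    moreover have "\<tau> \<circ> transpose j k = \<tau> \<circ> sref j"
      by (simp add: True sref_def)
    ultimately show ?thesis
      using len_comp_sref_descent[OF j, of \<tau>] less.prems True by simp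
  next
    case False
    then have jk: "j + 1 < k"
      using less.prems by simp
    define \<rho> where "\<rho> = \<tau> \<circ> sref j"
    define S where "S = {l. j + 1 < l \<and> l < k \<and> \<tau> k < \<tau> l \<and> \<tau> l < \<tau> j}"
    have \<rho>_perm: "\<rho> permutes {1..n}"
      unfolding \<rho>_def by (rule permutes_compose[OF sref_permutes[OF j] less.prems(1)])
    have \<rho>_apply: "\<rho> (j + 1) = \<tau> j" "\<rho> k = \<tau> k" "\<And>l. j + 1 < l \<Longrightarrow> \<rho> l = \<tau> l"
      using jk by (auto simp: \<rho>_def sref_apply)
    have "{l. j + 1 < l \<and> l < k \<and> \<rho> k < \<rho> l \<and> \<rho> l < \<rho> (j + 1)} = S"
      using \<rho>_apply by (auto simp: S_def)
    then have IH: "len n \<rho> = len n (\<rho> \<circ> transpose (j + 1) k) + 1 + 2 * card S"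
      using less.hyps[of "j + 1" \<rho>] less.prems \<rho>_perm \<rho>_apply jk by simp
    have "j < l \<longleftrightarrow> l = j + 1 \<or> j + 1 < l" for l
      by auto
    then have "{l. j < l \<and> l < k \<and> \<tau> k < \<tau> l \<and> \<tau> l < \<tau> j}
        = (if \<tau> k < \<tau> (j + 1) \<and> \<tau> (j + 1) < \<tau> j then insert (j + 1) S else S)"
      using jk by (auto simp: S_def)
    moreover have "finite S" "j + 1 \<notin> S"
      by (auto simp: S_def)
    ultimately show ?thesis
      using IH len_comp_transpose_step[OF less.prems(1) j(1) jk less.prems(4,5)]
      unfolding \<rho>_def by (simp split: if_splits)
  qed
qed

lemma covering_transpose_no_value_between:
  fixes n :: nat
  assumes "\<tau> permutes {1..n}" "1 \<le> j" "j < k" "k \<le> n" "\<tau> k < \<tau> j"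
    and "len n (\<tau> \<circ> transpose j k) + 1 = len n \<tau>" and "j < l" "l < k"
  shows "\<not> (\<tau> k < \<tau> l \<and> \<tau> l < \<tau> j)"
proof -
  have "card {l. j < l \<and> l < k \<and> \<tau> k < \<tau> l \<and> \<tau> l < \<tau> j} = 0"
    using len_comp_transpose[OF assms(1-5)] assms(6) by simp
  moreover have "finite {l. j < l \<and> l < k \<and> \<tau> k < \<tau> l \<and> \<tau> l < \<tau> j}"
    by (rule finite_subset[of _ "{..<k}"]) auto
  ultimately show ?thesis
    using assms(7,8) by auto
qed

lemma covering_transpose_ascent_iff:
  fixes n :: nat
  assumes \<tau>: "\<tau> permutes {1..n}" and jk: "1 \<le> j" "j + 1 < k" "k \<le> n" and desc: "\<tau> k < \<tau> j"
    and cover: "len n (\<tau> \<circ> transpose j k) + 1 = len n \<tau>" and m: "m = j \<or> m + 1 = k"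
  shows "(\<tau> \<circ> transpose j k) m < (\<tau> \<circ> transpose j k) (m + 1) \<longleftrightarrow> \<tau> m < \<tau> (m + 1)"
  using m
proof
  assume "m = j"
  moreover have "\<not> (\<tau> k < \<tau> (j + 1) \<and> \<tau> (j + 1) < \<tau> j)"
    using covering_transpose_no_value_between[OF \<tau> jk(1) _ jk(3) desc cover] jk by simp
  moreover have "\<tau> (j + 1) \<noteq> \<tau> j" "\<tau> (j + 1) \<noteq> \<tau> k"
    using jk by (simp_all add: inj_eq[OF permutes_inj[OF \<tau>]])
  ultimately show ?thesis
    using jk desc by auto
next
  assume "m + 1 = k"
  moreover have "\<not> (\<tau> k < \<tau> m \<and> \<tau> m < \<tau> j)"
    using covering_transpose_no_value_between[OF \<tau> jk(1) _ jk(3) desc cover, of m] jk \<open>m + 1 = k\<close> by simp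
  moreover have "\<tau> m \<noteq> \<tau> j" "\<tau> m \<noteq> \<tau> k"
    using jk \<open>m + 1 = k\<close> by (simp_all add: inj_eq[OF permutes_inj[OF \<tau>]])
  ultimately show ?thesis
    using jk desc by auto
qed

lemma len_comp_sref_same_ascent:
  fixes n :: nat
  assumes u: "u permutes {1..n}" and w: "w permutes {1..n}" and m: "1 \<le> m" "m < n"
    and same: "u m < u (m + 1) \<longleftrightarrow> w m < w (m + 1)" and cover: "len n w + 1 = len n u"
  shows "len n (w \<circ> sref m) + 1 = len n (u \<circ> sref m)"
proof (cases "u m < u (m + 1)")
  case True
  then show ?thesis
    using same cover len_comp_sref_ascent[OF m, of u] len_comp_sref_ascent[OF m, of w] by simp
next
  case False
  then have "u (m + 1) < u m" "w (m + 1) < w m"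
    using same inj_less_iff_not_less[OF permutes_inj[OF u], of m "m + 1"]
      inj_less_iff_not_less[OF permutes_inj[OF w], of m "m + 1"] by simp_all
  then show ?thesis
    using cover len_comp_sref_descent[OF m, of u] len_comp_sref_descent[OF m, of w] by simp
qed

lemma covering_transpose_comp_sref:
  fixes n :: nat
  assumes \<tau>: "\<tau> permutes {1..n}" and jk: "1 \<le> j" "j + 1 < k" "k \<le> n" and desc: "\<tau> k < \<tau> j"
    and cover: "len n (\<tau> \<circ> transpose j k) + 1 = len n \<tau>" and m: "m = j \<or> m + 1 = k"
  shows "len n (\<tau> \<circ> sref m \<circ> transpose (sref m j) (sref m k)) + 1 = len n (\<tau> \<circ> sref m)"
proof -
  have m_range: "1 \<le> m" "m < n"
    using jk m by auto
  have "\<tau> \<circ> transpose j k permutes {1..n}"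
    using jk by (intro permutes_compose[OF _ \<tau>] permutes_swap_id) auto
  from len_comp_sref_same_ascent[OF \<tau> this m_range
      covering_transpose_ascent_iff[OF \<tau> jk desc cover m, symmetric] cover]
  show ?thesis
    unfolding comp_transpose_comp_sref .
qed

section \<open>Functions invariant under descent cycling\<close>

locale descent_cycling =
  fixes n :: nat and f :: "(nat \<Rightarrow> nat) \<Rightarrow> (nat \<Rightarrow> nat) \<Rightarrow> (nat \<Rightarrow> nat) \<Rightarrow> int"
  assumes cycle: "\<And>u v w i. u permutes {1..n} \<Longrightarrow> v permutes {1..n} \<Longrightarrow> w permutes {1..n}
       \<Longrightarrow> len n u + len n v + len n w + 1 = n choose 2
       \<Longrightarrow> i \<in> {1..n-1} \<Longrightarrow> u i < u (i+1) \<Longrightarrow> v i < v (i+1) \<Longrightarrow> w i < w (i+1)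
       \<Longrightarrow> f (u \<circ> sref i) v w = f u (v \<circ> sref i) w \<and> f u (v \<circ> sref i) w = f u v (w \<circ> sref i)"
    and vanish: "\<And>u v w i. schubert_problem n u v w \<Longrightarrow> i \<in> {1..n-1}
       \<Longrightarrow> u i < u (i+1) \<Longrightarrow> v i < v (i+1) \<Longrightarrow> w i < w (i+1) \<Longrightarrow> f u v w = 0"
    and normalized: "f id id (longest n) = 1"
begin

lemma cycle_outer:
  assumes u: "u permutes {1..n}" and v: "v permutes {1..n}" and w: "w permutes {1..n}"
    and lens: "len n u + len n v + len n w = n choose 2"
    and m: "1 \<le> m" "m < n" and v_asc: "v m < v (m + 1)"
    and opposite: "u m < u (m + 1) \<longleftrightarrow> w (m + 1) < w m"
  shows "f u v w = f (u \<circ> sref m) v (w \<circ> sref m)"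
proof (cases "u m < u (m + 1)")
  case True
  let ?w = "w \<circ> sref m"
  have "f (u \<circ> sref m) v ?w = f u v (?w \<circ> sref m)"
  proof -
    have "len n ?w + 1 = len n w"
      using len_comp_sref_descent[OF m] True opposite by simp
    then show ?thesis
      using cycle[OF u v permutes_compose[OF sref_permutes[OF m] w], of m] lens m True v_asc opposite
      by (simp add: sref_apply)
  qed
  then show ?thesis
    by simp
next
  case False
  let ?u = "u \<circ> sref m"
  have "u (m + 1) < u m" "w m < w (m + 1)"
    using False opposite inj_less_iff_not_less[OF permutes_inj[OF u], of m "m + 1"]
      inj_less_iff_not_less[OF permutes_inj[OF w], of m "m + 1"] by simp_all
  moreover have "len n ?u + 1 = len n u"
    using len_comp_sref_descent[OF m] \<open>u (m + 1) < u m\<close> by simp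
  ultimately have "f (?u \<circ> sref m) v w = f ?u v (w \<circ> sref m)"
    using cycle[OF permutes_compose[OF sref_permutes[OF m] u] v w, of m] lens m v_asc
    by (simp add: sref_apply)
  then show ?thesis
    by simp
qed

lemma f_id_longest_comp:
  assumes "p permutes {1..n}"
  shows "f p id (longest n \<circ> p) = 1"
  using assms
proof (induction "len n p" arbitrary: p rule: less_induct)
  case less
  show ?case
  proof (cases "p = id")
    case True
    then show ?thesis
      using normalized by simp
  next
    case False
    then obtain m where m: "1 \<le> m" "m < n" and desc: "p (m + 1) < p m"
      using permutes_exists_descent[OF less.prems] by blast
    define q where "q = p \<circ> sref m"
    have q: "q permutes {1..n}"
      unfolding q_def by (rule permutes_compose[OF sref_permutes[OF m] less.prems])
    have "len n q + 1 = len n p"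
      unfolding q_def by (rule len_comp_sref_descent[OF m desc])
    then have IH: "f q id (longest n \<circ> q) = 1"
      using less.hyps q by simp
    have "(longest n \<circ> p) m < (longest n \<circ> p) (m + 1)"
      using longest_comp_less_iff[OF less.prems] m desc by simp
    then have "f (q \<circ> sref m) id (longest n \<circ> p) = f q id (longest n \<circ> p \<circ> sref m)"
      using cycle[OF q permutes_id permutes_compose[OF less.prems longest_permutes], of m]
        \<open>len n q + 1 = len n p\<close> len_add_len_longest_comp[OF less.prems] len_id[of n] m desc
      by (simp add: q_def sref_apply comp_assoc)
    moreover have "q \<circ> sref m = p"
      by (simp add: q_def)
    moreover have "longest n \<circ> p \<circ> sref m = longest n \<circ> q"
      by (simp add: q_def comp_assoc)
    ultimately show ?thesis
      using IH by simp
  qed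
qed

lemma monk_rule_adjacent:
  assumes p: "p permutes {1..n}" and i: "1 \<le> i" "i < n" and j: "1 \<le> j" "j < n"
    and desc: "(longest n \<circ> p) (j + 1) < (longest n \<circ> p) j"
  shows "f p (sref i) (longest n \<circ> p \<circ> sref j) = (if j = i then 1 else 0)"
proof -
  let ?\<sigma> = "longest n \<circ> p \<circ> sref j"
  have \<sigma>: "?\<sigma> permutes {1..n}"
    by (intro permutes_compose[OF sref_permutes[OF j]] permutes_compose[OF p longest_permutes])
  have p_asc: "p j < p (j + 1)"
    using desc longest_comp_less_iff[OF p] j by simp
  have \<sigma>_asc: "?\<sigma> j < ?\<sigma> (j + 1)"
    using desc by (simp add: sref_apply)
  have lens: "len n p + len n ?\<sigma> + 1 = n choose 2"
    using len_comp_sref_descent[OF j desc] len_add_len_longest_comp[OF p] by linarith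
  show ?thesis
  proof (cases "j = i")
    case True
    then have "f (p \<circ> sref i) id ?\<sigma> = f p (sref i) ?\<sigma> \<and> f p (sref i) ?\<sigma> = f p id (?\<sigma> \<circ> sref i)"
      using cycle[OF p permutes_id \<sigma>, of i] lens len_id[of n] p_asc \<sigma>_asc i by simp
    then have "f p (sref i) ?\<sigma> = f p id (longest n \<circ> p)"
      using True by simp
    then show ?thesis
      using True f_id_longest_comp[OF p] by simp
  next
    case False
    have "schubert_problem n p (sref i) ?\<sigma>"
      unfolding schubert_problem_def using p sref_permutes[OF i] \<sigma> lens len_sref[OF i] by simp
    then have "f p (sref i) ?\<sigma> = 0"
      by (rule vanish[of _ _ _ j]) (use j p_asc \<sigma>_asc False in \<open>auto simp: sref_apply\<close>)
    then show ?thesis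
      using False by simp
  qed
qed

lemma monk_rule_shift:
  assumes p: "p permutes {1..n}" and i: "1 \<le> i" "i < n" and jk: "1 \<le> j" "j + 1 < k" "k \<le> n"
    and desc: "(longest n \<circ> p) k < (longest n \<circ> p) j"
    and cover: "len n (longest n \<circ> p \<circ> transpose j k) + 1 = len n (longest n \<circ> p)"
    and m: "m = j \<or> m + 1 = k" "m \<noteq> i"
  shows "f p (sref i) (longest n \<circ> p \<circ> transpose j k)
           = f (p \<circ> sref m) (sref i) (longest n \<circ> p \<circ> transpose j k \<circ> sref m)"
proof -
  let ?\<tau> = "longest n \<circ> p"
  let ?\<sigma> = "longest n \<circ> p \<circ> transpose j k"
  have m_range: "1 \<le> m" "m < n"
    using jk m by auto
  have \<tau>: "?\<tau> permutes {1..n}"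
    by (rule permutes_compose[OF p longest_permutes])
  have \<sigma>: "?\<sigma> permutes {1..n}"
    using jk by (intro permutes_compose[OF _ \<tau>] permutes_swap_id) auto
  have "p m < p (m + 1) \<longleftrightarrow> ?\<tau> (m + 1) < ?\<tau> m"
    using longest_comp_less_iff[OF p] m_range by simp
  also have "\<dots> \<longleftrightarrow> ?\<sigma> (m + 1) < ?\<sigma> m"
    using covering_transpose_ascent_iff[OF \<tau> jk desc cover m(1)]
      inj_less_iff_not_less[OF permutes_inj[OF \<tau>], of m "m + 1"]
      inj_less_iff_not_less[OF permutes_inj[OF \<sigma>], of m "m + 1"] by simp
  finally show ?thesis
    using cycle_outer[OF p sref_permutes[OF i] \<sigma> _ m_range]
      len_add_len_longest_comp[OF p] cover len_sref[OF i] m(2)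
    by (simp add: sref_apply)
qed

lemma monk_rule:
  assumes p: "p permutes {1..n}" and i: "1 \<le> i" "i < n" and jk: "1 \<le> j" "j < k" "k \<le> n"
    and desc: "(longest n \<circ> p) k < (longest n \<circ> p) j"
    and cover: "len n (longest n \<circ> p \<circ> transpose j k) + 1 = len n (longest n \<circ> p)"
  shows "f p (sref i) (longest n \<circ> p \<circ> transpose j k) = (if j \<le> i \<and> i < k then 1 else 0)"
  using p jk desc cover
proof (induction "k - j" arbitrary: p j k rule: less_induct)
  case less
  show ?case
  proof (cases "k = j + 1")
    case True
    then show ?thesis
      using monk_rule_adjacent[OF less.prems(1) i less.prems(2)] less.prems by (simp add: sref_def)
  next
    case False
    then have jk: "j + 1 < k"
      using less.prems by simp
    obtain m where m: "m = j \<or> m + 1 = k" "m \<noteq> i"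
    proof (cases "j = i")
      case True
      then show ?thesis
        using jk that[of "k - 1"] by simp
    qed (use that[of j] in simp)
    define p' where "p' = p \<circ> sref m"
    define j' where "j' = sref m j"
    define k' where "k' = sref m k"
    have shifted: "1 \<le> j'" "j' < k'" "k' \<le> n" "k' - j' < k - j"
      "j' \<le> i \<and> i < k' \<longleftrightarrow> j \<le> i \<and> i < k"
      using m jk less.prems(2-4) by (auto simp: j'_def k'_def sref_apply)
    have p': "p' permutes {1..n}"
      unfolding p'_def using m jk less.prems(2,4)
      by (intro permutes_compose[OF sref_permutes less.prems(1)]) auto
    have \<tau>': "longest n \<circ> p' = longest n \<circ> p \<circ> sref m"
      by (simp add: p'_def comp_assoc)
    have desc': "(longest n \<circ> p') k' < (longest n \<circ> p') j'"
      using less.prems(5) by (simp add: \<tau>' j'_def k'_def)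
    have cover': "len n (longest n \<circ> p' \<circ> transpose j' k') + 1 = len n (longest n \<circ> p')"
      unfolding \<tau>' j'_def k'_def
      by (rule covering_transpose_comp_sref[OF permutes_compose[OF less.prems(1) longest_permutes]
            less.prems(2) jk less.prems(4-6) m(1)])
    have "f p (sref i) (longest n \<circ> p \<circ> transpose j k) = f p' (sref i) (longest n \<circ> p' \<circ> transpose j' k')"
      unfolding monk_rule_shift[OF less.prems(1) i less.prems(2) jk less.prems(4-6) m] comp_transpose_comp_sref
      by (simp add: p'_def j'_def k'_def comp_assoc)
    also have "\<dots> = (if j \<le> i \<and> i < k then 1 else 0)"
      using less.hyps[OF shifted(4) p' shifted(1-3) desc' cover'] shifted(5) by simp
    finally show ?thesis .
  qed
qed

end

theorem theorem1:
  fixes n :: nat and f :: "(nat \<Rightarrow> nat) \<Rightarrow> (nat \<Rightarrow> nat) \<Rightarrow> (nat \<Rightarrow> nat) \<Rightarrow> int"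
  assumes n2: "n \<ge> 2"
    and cyc: "\<And>u v w i. u permutes {1..n} \<Longrightarrow> v permutes {1..n} \<Longrightarrow> w permutes {1..n}
       \<Longrightarrow> len n u + len n v + len n w + 1 = n choose 2
       \<Longrightarrow> i \<in> {1..n-1} \<Longrightarrow> u i < u (i+1) \<Longrightarrow> v i < v (i+1) \<Longrightarrow> w i < w (i+1)
       \<Longrightarrow> f (u \<circ> sref i) v w = f u (v \<circ> sref i) w \<and> f u (v \<circ> sref i) w = f u v (w \<circ> sref i)"
    and vanish: "\<And>u v w i. schubert_problem n u v w \<Longrightarrow> i \<in> {1..n-1}
       \<Longrightarrow> u i < u (i+1) \<Longrightarrow> v i < v (i+1) \<Longrightarrow> w i < w (i+1) \<Longrightarrow> f u v w = 0"
    and norm: "f id id (longest n) = 1"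
    and pi: "\<pi> permutes {1..n}"
    and i: "i \<in> {1..n-1}"
    and tau: "\<tau> = (\<lambda>m. if m \<in> {1..n} then n + 1 - \<pi> m else m)"
    and jk: "j \<in> {1..n}" "k \<in> {1..n}" "j < k" "\<tau> j > \<tau> k"
    and sigma: "\<sigma> = \<tau> \<circ> Transposition.transpose j k"
    and lsig: "len n \<sigma> + 1 = len n \<tau>"
  shows "(j \<le> i \<and> i < k \<longrightarrow> f \<pi> (sref i) \<sigma> = 1)
       \<and> ((j \<le> i \<and> k \<le> i) \<or> (i + 1 \<le> j \<and> i + 1 \<le> k) \<longrightarrow> f \<pi> (sref i) \<sigma> = 0)"
proof -
  interpret descent_cycling n f
    by unfold_locales (fact cyc vanish norm)+
  have \<tau>: "\<tau> = longest n \<circ> \<pi>"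
    using longest_comp_eq[OF pi] tau by simp
  have "f \<pi> (sref i) \<sigma> = (if j \<le> i \<and> i < k then 1 else 0)"
    unfolding sigma \<tau>
    by (rule monk_rule[OF pi]) (use i jk lsig sigma \<tau> in auto)
  then show ?thesis
    by auto
qed

end
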